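(* Let $G=(V,D,B)$ be a mixed graph with $V=\{1,\dots,n\}$ and let $D_L,D_R\subset D$. Let $G^*_{\mathrm{flow}}$ be the directed graph on $V\cup V'$, $V'=\{1',\dots,n'\}$, with edges $i\to j$ if $(j,i)\in D_L$, $i\to i'$ for all $i\in V$, $i\to j'$ if $(i,j)\in B$, and $i'\to j'$ if $(i,j)\in D_R$. Let $\tilde G=(\tilde V,\tilde D,\emptyset)$ be the bidirected subdivision of $G$: $\tilde V$ is $V$ together with one new vertex $u_{ij}$ for each bidirected edge $i\leftrightarrow j\in G$, and $\tilde D$ is $D$ together with the edges $u_{ij}\to i$ and $u_{ij}\to j$ for each such bidirected edge; let $\tilde D_L$ (resp. $\tilde D_R$) be $D_L$ (resp. $D_R$) together with all these new edges $u_{ij}\to i$, $u_{ij}\to j$. Let $\tilde G^*_{\mathrm{flow}}$ be the directed graph on $\tilde V\cup\tilde V'$ with edges $a\to b$ if $(b,a)\in\tilde D_L$, $a\to a'$ for all $a\in\tilde V$, and $a'\to b'$ if $(a,b)\in\tilde D_R$. In both networks all vertices and edges have capacity $1$. Then for any $S=\{s_1,\dots,s_k\}$, $T=\{t_1,\dots,t_k\}\subset V$, the maximum flow from $S$ to $T'=\{t_1',\dots,t_k'\}$ in $G^*_{\mathrm{flow}}$ equals the maximum flow from $S$ to $T'$ in $\tilde G^*_{\mathrm{flow}}$.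
   Context: A mixed graph $G=(V,D,B)$ has directed edges $D\subset V\times V$ and symmetric bidirected edges $B\subset V\times V$ (a bidirected edge $i\leftrightarrow j$ corresponds to the pair $(i,j),(j,i)\in B$), no self-loops. Maximum flow allows multiple sources and sinks and vertex capacities. *)

theory Defs
  imports Main "HOL.Real"
begin

datatype 'a node = Orig 'a | Prime 'a

(* Vertices of the bidirected subdivision: old vertices, and one new vertex u_{ij}
   per bidirected edge i <-> j, indexed by the unordered pair {i,j} *)
datatype 'a svert = Old 'a | Sub "'a set"

definition mixed_graph :: "nat \<Rightarrow> (nat \<times> nat) set \<Rightarrow> (nat \<times> nat) set \<Rightarrow> bool" where
  "mixed_graph n D B \<longleftrightarrow>
     D \<subseteq> {1..n} \<times> {1..n} \<and> B \<subseteq> {1..n} \<times> {1..n} \<and> sym B \<and>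
     (\<forall>i. (i,i) \<notin> D) \<and> (\<forall>i. (i,i) \<notin> B)"

definition flow_edges :: "'a set \<Rightarrow> ('a \<times> 'a) set \<Rightarrow> ('a \<times> 'a) set \<Rightarrow> ('a node \<times> 'a node) set" where
  "flow_edges W DL DR =
     {(Orig a, Orig b) | a b. (b, a) \<in> DL} \<union> {(Orig a, Prime a) | a. a \<in> W} \<union>
     {(Prime a, Prime b) | a b. (a, b) \<in> DR}"

definition mixed_flow_edges :: "'a set \<Rightarrow> ('a \<times> 'a) set \<Rightarrow> ('a \<times> 'a) set \<Rightarrow> ('a \<times> 'a) set \<Rightarrow> ('a node \<times> 'a node) set" where
  "mixed_flow_edges W DL DR B = flow_edges W DL DR \<union> {(Orig i, Prime j) | i j. (i, j) \<in> B}"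

definition net_vertices :: "'a set \<Rightarrow> 'a node set" where
  "net_vertices W = Orig ` W \<union> Prime ` W"

definition subdiv_vertices :: "'a set \<Rightarrow> ('a \<times> 'a) set \<Rightarrow> 'a svert set" where
  "subdiv_vertices V B = Old ` V \<union> {Sub {i, j} | i j. (i, j) \<in> B}"

definition subdiv_new_edges :: "('a \<times> 'a) set \<Rightarrow> ('a svert \<times> 'a svert) set" where
  "subdiv_new_edges B = {(Sub {i, j}, Old i) | i j. (i, j) \<in> B} \<union> {(Sub {i, j}, Old j) | i j. (i, j) \<in> B}"

definition subdiv_edges :: "('a \<times> 'a) set \<Rightarrow> ('a \<times> 'a) set \<Rightarrow> ('a svert \<times> 'a svert) set" where
  "subdiv_edges D B = map_prod Old Old ` D \<union> subdiv_new_edges B"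

(* Flow in a network (vertex set W, edges E) with unit edge and unit vertex capacities,
   multiple sources S and sinks T: a v is the amount injected at source v, b v the amount
   extracted at sink v. *)
definition is_flow :: "'v set \<Rightarrow> ('v \<times> 'v) set \<Rightarrow> 'v set \<Rightarrow> 'v set \<Rightarrow>
    ('v \<times> 'v \<Rightarrow> real) \<Rightarrow> ('v \<Rightarrow> real) \<Rightarrow> ('v \<Rightarrow> real) \<Rightarrow> bool" where
  "is_flow W E S T f a b \<longleftrightarrow>
     (\<forall>e \<in> E. 0 \<le> f e \<and> f e \<le> 1) \<and>
     (\<forall>v. 0 \<le> a v \<and> 0 \<le> b v) \<and>
     (\<forall>v. v \<notin> S \<inter> W \<longrightarrow> a v = 0) \<and>
     (\<forall>v. v \<notin> T \<inter> W \<longrightarrow> b v = 0) \<and>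
     (\<forall>v \<in> W. a v + (\<Sum>u \<in> {u. (u, v) \<in> E}. f (u, v)) = (\<Sum>w \<in> {w. (v, w) \<in> E}. f (v, w)) + b v) \<and>
     (\<forall>v \<in> W. a v + (\<Sum>u \<in> {u. (u, v) \<in> E}. f (u, v)) \<le> 1)"

definition max_flow :: "'v set \<Rightarrow> ('v \<times> 'v) set \<Rightarrow> 'v set \<Rightarrow> 'v set \<Rightarrow> real" where
  "max_flow W E S T = Sup {(\<Sum>v \<in> S. a v) | f a b. is_flow W E S T f a b}"

end

theory Submission imports Defs begin

(* The two networks differ only at the bidirected edges i <-> j: the first has the edges
   i -> j' and j -> i', the second the gadget i, j -> u_ij -> u_ij' -> i', j' whose middle edge
   lies on all its paths, so that it carries at most one unit.

   A flow g of the subdivided network is merged into one of the first network by sending along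
   i -> i' the part min (g (i, u_ij)) (g (u_ij', i')) that the gadget may be taken to return to i',
   and the rest of g (i, u_ij) along i -> j'; since the gadget is balanced, the flow arriving at
   j' is then exactly g (u_ij', j').

   Conversely, a flow f of the first network is split after rerouting the common part
   min (f (i, j')) (f (j, i')) along i -> i' and j -> j'; the gadget then carries
   |f (i, j') - f (j, i')| <= 1.

   Both translations keep the amounts injected at the sources, so the two networks have the same
   flow values. *)

definition partner :: "'a set \<Rightarrow> 'a \<Rightarrow> 'a" where
  "partner s i = (THE j. j \<in> s \<and> j \<noteq> i)"

lemma partner_doubleton [simp]:
  assumes "i \<noteq> j" shows "partner {i, j} i = j" and "partner {i, j} j = i"
  using assms unfolding partner_def by (auto intro: the_equality)

lemma sum_image_Un_disjoint:
  assumes "finite A" "finite C" "inj f" "inj g" "\<And>a c. f a \<noteq> g c"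
  shows "sum h (f ` A \<union> g ` C) = (\<Sum>a\<in>A. h (f a)) + (\<Sum>c\<in>C. h (g c))"
proof -
  have "sum h (f ` A \<union> g ` C) = sum h (f ` A) + sum h (g ` C)"
    by (rule sum.union_disjoint) (use assms in auto)
  also have "\<dots> = (\<Sum>a\<in>A. h (f a)) + (\<Sum>c\<in>C. h (g c))"
    using assms by (simp add: sum.reindex inj_on_def inj_def)
  finally show ?thesis .
qed

lemma is_flow_edge_bounds: "is_flow W E S T f a b \<Longrightarrow> e \<in> E \<Longrightarrow> 0 \<le> f e \<and> f e \<le> 1"
  unfolding is_flow_def by blast

lemma is_flow_supply_nonneg: "is_flow W E S T f a b \<Longrightarrow> 0 \<le> a v \<and> 0 \<le> b v"
  unfolding is_flow_def by blast

lemma is_flow_supply_outside: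
  "is_flow W E S T f a b \<Longrightarrow> v \<notin> S \<inter> W \<Longrightarrow> a v = 0"
  "is_flow W E S T f a b \<Longrightarrow> v \<notin> T \<inter> W \<Longrightarrow> b v = 0"
  unfolding is_flow_def by blast+

lemma is_flow_conservation:
  "is_flow W E S T f a b \<Longrightarrow> v \<in> W \<Longrightarrow>
    a v + (\<Sum>u\<in>{u. (u, v) \<in> E}. f (u, v)) = (\<Sum>w\<in>{w. (v, w) \<in> E}. f (v, w)) + b v"
  unfolding is_flow_def by blast

lemma is_flow_throughput:
  "is_flow W E S T f a b \<Longrightarrow> v \<in> W \<Longrightarrow> a v + (\<Sum>u\<in>{u. (u, v) \<in> E}. f (u, v)) \<le> 1"
  unfolding is_flow_def by blast

lemma node_svert_cases:
  obtains i where "x = Orig (Old i)" | s where "x = Orig (Sub s)"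
    | i where "x = Prime (Old i)" | s where "x = Prime (Sub s)"
  by (cases x; rename_tac y; case_tac y) auto

definition cancel :: "('a node \<times> 'a node \<Rightarrow> real) \<Rightarrow> 'a \<Rightarrow> 'a \<Rightarrow> real" where
  "cancel f i j = min (f (Orig i, Prime j)) (f (Orig j, Prime i))"

definition excess :: "('a node \<times> 'a node \<Rightarrow> real) \<Rightarrow> 'a \<Rightarrow> 'a \<Rightarrow> real" where
  "excess f i j = f (Orig i, Prime j) - cancel f i j"

lemma cancel_commute: "cancel f i j = cancel f j i"
  by (simp add: cancel_def min.commute)

lemma excess_nonneg: "0 \<le> excess f i j"
  by (simp add: excess_def cancel_def)

(* At most one of the two excesses is nonzero. *)
lemma excess_add_excess: "excess f i j + excess f j i = \<bar>f (Orig i, Prime j) - f (Orig j, Prime i)\<bar>"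
  by (simp add: excess_def cancel_def min_def)

locale bidirected_subdivision =
  fixes V :: "'a set" and B DL DR :: "('a \<times> 'a) set"
  assumes finite_V: "finite V" and B_V: "B \<subseteq> V \<times> V" and sym_B: "sym B"
    and irrefl_B: "\<And>i. (i, i) \<notin> B" and DL_V: "DL \<subseteq> V \<times> V" and DR_V: "DR \<subseteq> V \<times> V"
begin

abbreviation "Wmix \<equiv> net_vertices V"
abbreviation "Emix \<equiv> mixed_flow_edges V DL DR B"
abbreviation "Vsub \<equiv> subdiv_vertices V B"
abbreviation "Wsub \<equiv> net_vertices Vsub"
abbreviation "Esub \<equiv> flow_edges Vsub (map_prod Old Old ` DL \<union> subdiv_new_edges B)
                                     (map_prod Old Old ` DR \<union> subdiv_new_edges B)"

lemma B_swap: "(i, j) \<in> B \<Longrightarrow> (j, i) \<in> B"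
  using sym_B by (auto simp: sym_def)

lemma B_neq: "(i, j) \<in> B \<Longrightarrow> i \<noteq> j"
  using irrefl_B by auto

lemma finite_neighbours:
  "finite {a. (i, a) \<in> DL}" "finite {a. (a, i) \<in> DL}"
  "finite {a. (i, a) \<in> DR}" "finite {a. (a, i) \<in> DR}" "finite {a. (i, a) \<in> B}"
  by (rule finite_subset[OF _ finite_V], use DL_V DR_V B_V in auto)+

lemma Wmix_iff [simp]: "Orig i \<in> Wmix \<longleftrightarrow> i \<in> V" "Prime i \<in> Wmix \<longleftrightarrow> i \<in> V"
  by (auto simp: net_vertices_def)

lemma Wsub_iff [simp]: "Orig x \<in> Wsub \<longleftrightarrow> x \<in> Vsub" "Prime x \<in> Wsub \<longleftrightarrow> x \<in> Vsub"
  by (auto simp: net_vertices_def)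

lemma Vsub_iff [simp]:
  "Old i \<in> Vsub \<longleftrightarrow> i \<in> V" "Sub s \<in> Vsub \<longleftrightarrow> (\<exists>i j. (i, j) \<in> B \<and> s = {i, j})"
  by (auto simp: subdiv_vertices_def)

lemma Emix_iff [simp]:
  "(Orig a, Orig b) \<in> Emix \<longleftrightarrow> (b, a) \<in> DL"
  "(Orig a, Prime b) \<in> Emix \<longleftrightarrow> a = b \<and> a \<in> V \<or> (a, b) \<in> B"
  "(Prime a, Prime b) \<in> Emix \<longleftrightarrow> (a, b) \<in> DR"
  "(Prime a, Orig b) \<notin> Emix"
  by (auto simp: mixed_flow_edges_def flow_edges_def)

lemma subdiv_new_edge_iff:
  "(Sub s, Old a) \<in> subdiv_new_edges B \<longleftrightarrow> (\<exists>j. (a, j) \<in> B \<and> s = {a, j})"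
  unfolding subdiv_new_edges_def using B_swap by (auto simp: insert_commute)

lemma Esub_iff [simp]:
  "(Orig (Old a), Orig (Old b)) \<in> Esub \<longleftrightarrow> (b, a) \<in> DL"
  "(Orig (Old a), Orig (Sub s)) \<in> Esub \<longleftrightarrow> (\<exists>j. (a, j) \<in> B \<and> s = {a, j})"
  "(Orig (Sub s), Orig x) \<notin> Esub"
  "(Orig x, Prime y) \<in> Esub \<longleftrightarrow> x = y \<and> x \<in> Vsub"
  "(Prime x, Orig y) \<notin> Esub"
  "(Prime (Old a), Prime (Old b)) \<in> Esub \<longleftrightarrow> (a, b) \<in> DR"
  "(Prime (Sub s), Prime (Old b)) \<in> Esub \<longleftrightarrow> (\<exists>j. (b, j) \<in> B \<and> s = {b, j})"
  "(Prime x, Prime (Sub s)) \<notin> Esub"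
  by (auto simp: flow_edges_def subdiv_new_edge_iff[symmetric]) (auto simp: subdiv_new_edges_def)


lemma sum_Emix_into_Orig:
  "(\<Sum>u\<in>{u. (u, Orig i) \<in> Emix}. h u) = (\<Sum>a\<in>{a. (i, a) \<in> DL}. h (Orig a))"
proof -
  have "{u. (u, Orig i) \<in> Emix} = Orig ` {a. (i, a) \<in> DL}"
    by (rule set_eqI, case_tac x) auto
  then show ?thesis by (simp add: sum.reindex inj_on_def)
qed

lemma sum_Emix_out_of_Prime:
  "(\<Sum>u\<in>{u. (Prime i, u) \<in> Emix}. h u) = (\<Sum>a\<in>{a. (i, a) \<in> DR}. h (Prime a))"
proof -
  have "{u. (Prime i, u) \<in> Emix} = Prime ` {a. (i, a) \<in> DR}"
    by (rule set_eqI, case_tac x) auto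
  then show ?thesis by (simp add: sum.reindex inj_on_def)
qed

lemma sum_Emix_out_of_Orig:
  assumes "i \<in> V"
  shows "(\<Sum>u\<in>{u. (Orig i, u) \<in> Emix}. h u) =
    (\<Sum>b\<in>{b. (b, i) \<in> DL}. h (Orig b)) + h (Prime i) + (\<Sum>j\<in>{j. (i, j) \<in> B}. h (Prime j))"
proof -
  have "{u. (Orig i, u) \<in> Emix} =
      insert (Prime i) (Orig ` {b. (b, i) \<in> DL} \<union> Prime ` {j. (i, j) \<in> B})"
    using assms by (rule_tac set_eqI, case_tac x) auto
  moreover have "Prime i \<notin> Orig ` {b. (b, i) \<in> DL} \<union> Prime ` {j. (i, j) \<in> B}"
    using irrefl_B by auto
  ultimately show ?thesis
    by (simp add: finite_neighbours sum_image_Un_disjoint inj_def algebra_simps)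
qed

lemma sum_Emix_into_Prime:
  assumes "i \<in> V"
  shows "(\<Sum>u\<in>{u. (u, Prime i) \<in> Emix}. h u) =
    h (Orig i) + (\<Sum>a\<in>{a. (a, i) \<in> DR}. h (Prime a)) + (\<Sum>j\<in>{j. (i, j) \<in> B}. h (Orig j))"
proof -
  have "{u. (u, Prime i) \<in> Emix} =
      insert (Orig i) (Prime ` {a. (a, i) \<in> DR} \<union> Orig ` {j. (i, j) \<in> B})"
    using assms B_swap by (rule_tac set_eqI, case_tac x) auto
  moreover have "Orig i \<notin> Prime ` {a. (a, i) \<in> DR} \<union> Orig ` {j. (i, j) \<in> B}"
    using irrefl_B by auto
  ultimately show ?thesis
    by (simp add: finite_neighbours sum_image_Un_disjoint inj_def algebra_simps)
qed

lemma sum_Esub_into_Orig_Old: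
  "(\<Sum>u\<in>{u. (u, Orig (Old i)) \<in> Esub}. h u) = (\<Sum>a\<in>{a. (i, a) \<in> DL}. h (Orig (Old a)))"
proof -
  have "{u. (u, Orig (Old i)) \<in> Esub} = (\<lambda>a. Orig (Old a)) ` {a. (i, a) \<in> DL}"
    by (rule set_eqI, rule_tac x=x in node_svert_cases) auto
  then show ?thesis by (simp add: sum.reindex inj_on_def)
qed

lemma sum_Esub_out_of_Prime_Old:
  "(\<Sum>u\<in>{u. (Prime (Old i), u) \<in> Esub}. h u) = (\<Sum>a\<in>{a. (i, a) \<in> DR}. h (Prime (Old a)))"
proof -
  have "{u. (Prime (Old i), u) \<in> Esub} = (\<lambda>a. Prime (Old a)) ` {a. (i, a) \<in> DR}"
    by (rule set_eqI, rule_tac x=x in node_svert_cases) auto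
  then show ?thesis by (simp add: sum.reindex inj_on_def)
qed

lemma sum_Esub_out_of_Orig_Old:
  assumes "i \<in> V"
  shows "(\<Sum>u\<in>{u. (Orig (Old i), u) \<in> Esub}. h u) = (\<Sum>b\<in>{b. (b, i) \<in> DL}. h (Orig (Old b)))
    + h (Prime (Old i)) + (\<Sum>j\<in>{j. (i, j) \<in> B}. h (Orig (Sub {i, j})))"
proof -
  have "{u. (Orig (Old i), u) \<in> Esub} = insert (Prime (Old i))
      ((\<lambda>b. Orig (Old b)) ` {b. (b, i) \<in> DL} \<union> (\<lambda>j. Orig (Sub {i, j})) ` {j. (i, j) \<in> B})"
    using assms by (rule_tac set_eqI, rule_tac x=x in node_svert_cases) auto
  moreover have "Prime (Old i) \<notin>
      (\<lambda>b. Orig (Old b)) ` {b. (b, i) \<in> DL} \<union> (\<lambda>j. Orig (Sub {i, j})) ` {j. (i, j) \<in> B}"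
    by auto
  moreover have inj: "inj (\<lambda>j. Orig (Sub {i, j}))"
    by (auto simp: inj_def doubleton_eq_iff)
  ultimately show ?thesis
    by (simp add: finite_neighbours sum_image_Un_disjoint inj inj_def algebra_simps)
qed

lemma sum_Esub_into_Prime_Old:
  assumes "i \<in> V"
  shows "(\<Sum>u\<in>{u. (u, Prime (Old i)) \<in> Esub}. h u) = h (Orig (Old i))
    + (\<Sum>a\<in>{a. (a, i) \<in> DR}. h (Prime (Old a))) + (\<Sum>j\<in>{j. (i, j) \<in> B}. h (Prime (Sub {i, j})))"
proof -
  have "{u. (u, Prime (Old i)) \<in> Esub} = insert (Orig (Old i))
      ((\<lambda>a. Prime (Old a)) ` {a. (a, i) \<in> DR} \<union> (\<lambda>j. Prime (Sub {i, j})) ` {j. (i, j) \<in> B})"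
    using assms by (rule_tac set_eqI, rule_tac x=x in node_svert_cases) auto
  moreover have "Orig (Old i) \<notin>
      (\<lambda>a. Prime (Old a)) ` {a. (a, i) \<in> DR} \<union> (\<lambda>j. Prime (Sub {i, j})) ` {j. (i, j) \<in> B}"
    by auto
  moreover have inj: "inj (\<lambda>j. Prime (Sub {i, j}))"
    by (auto simp: inj_def doubleton_eq_iff)
  ultimately show ?thesis
    by (simp add: finite_neighbours sum_image_Un_disjoint inj inj_def algebra_simps)
qed

lemma sums_Esub_at_Sub:
  assumes "(i, j) \<in> B"
  shows "(\<Sum>u\<in>{u. (u, Orig (Sub {i, j})) \<in> Esub}. h u) = h (Orig (Old i)) + h (Orig (Old j))"
    and "(\<Sum>u\<in>{u. (Orig (Sub {i, j}), u) \<in> Esub}. h u) = h (Prime (Sub {i, j}))"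
    and "(\<Sum>u\<in>{u. (u, Prime (Sub {i, j})) \<in> Esub}. h u) = h (Orig (Sub {i, j}))"
    and "(\<Sum>u\<in>{u. (Prime (Sub {i, j}), u) \<in> Esub}. h u) = h (Prime (Old i)) + h (Prime (Old j))"
proof -
  have "{u. (u, Orig (Sub {i, j})) \<in> Esub} = {Orig (Old i), Orig (Old j)}"
    "{u. (Orig (Sub {i, j}), u) \<in> Esub} = {Prime (Sub {i, j})}"
    "{u. (u, Prime (Sub {i, j})) \<in> Esub} = {Orig (Sub {i, j})}"
    "{u. (Prime (Sub {i, j}), u) \<in> Esub} = {Prime (Old i), Prime (Old j)}"
    using assms B_swap
    by (rule_tac set_eqI, rule_tac x=x in node_svert_cases; auto simp: doubleton_eq_iff)+
  then show "(\<Sum>u\<in>{u. (u, Orig (Sub {i, j})) \<in> Esub}. h u) = h (Orig (Old i)) + h (Orig (Old j))"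
    and "(\<Sum>u\<in>{u. (Orig (Sub {i, j}), u) \<in> Esub}. h u) = h (Prime (Sub {i, j}))"
    and "(\<Sum>u\<in>{u. (u, Prime (Sub {i, j})) \<in> Esub}. h u) = h (Orig (Sub {i, j}))"
    and "(\<Sum>u\<in>{u. (Prime (Sub {i, j}), u) \<in> Esub}. h u) = h (Prime (Old i)) + h (Prime (Old j))"
    using B_neq[OF assms] by simp_all
qed

lemma Emix_cases:
  assumes "e \<in> Emix"
  obtains (Orig_Orig) a c where "e = (Orig a, Orig c)" "(c, a) \<in> DL"
    | (Prime_Prime) a c where "e = (Prime a, Prime c)" "(a, c) \<in> DR"
    | (shortcut) i where "e = (Orig i, Prime i)" "i \<in> V"
    | (bidirected) i j where "e = (Orig i, Prime j)" "(i, j) \<in> B"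
  using assms unfolding mixed_flow_edges_def flow_edges_def by blast

lemma Esub_cases:
  assumes "e \<in> Esub"
  obtains (Orig_Old) a c where "e = (Orig (Old a), Orig (Old c))" "(c, a) \<in> DL"
    | (Prime_Old) a c where "e = (Prime (Old a), Prime (Old c))" "(a, c) \<in> DR"
    | (shortcut) i where "e = (Orig (Old i), Prime (Old i))" "i \<in> V"
    | (into_Sub) i j where "e = (Orig (Old i), Orig (Sub {i, j}))" "(i, j) \<in> B"
    | (through_Sub) i j where "e = (Orig (Sub {i, j}), Prime (Sub {i, j}))" "(i, j) \<in> B"
    | (out_of_Sub) i j where "e = (Prime (Sub {i, j}), Prime (Old i))" "(i, j) \<in> B"
proof -
  obtain u w where e: "e = (u, w)" by fastforce
  show ?thesis
    using assms that unfolding e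
    by (cases u rule: node_svert_cases; cases w rule: node_svert_cases) auto
qed

definition sub_in :: "('a svert node \<times> 'a svert node \<Rightarrow> real) \<Rightarrow> 'a \<Rightarrow> 'a \<Rightarrow> real" where
  "sub_in g i j = g (Orig (Old i), Orig (Sub {i, j}))"

definition sub_out :: "('a svert node \<times> 'a svert node \<Rightarrow> real) \<Rightarrow> 'a \<Rightarrow> 'a \<Rightarrow> real" where
  "sub_out g i j = g (Prime (Sub {i, j}), Prime (Old i))"

definition sub_back :: "('a svert node \<times> 'a svert node \<Rightarrow> real) \<Rightarrow> 'a \<Rightarrow> 'a \<Rightarrow> real" where
  "sub_back g i j = min (sub_in g i j) (sub_out g i j)"

fun merge_flow :: "('a svert node \<times> 'a svert node \<Rightarrow> real) \<Rightarrow> 'a node \<times> 'a node \<Rightarrow> real" where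
  "merge_flow g (Orig a, Orig b) = g (Orig (Old a), Orig (Old b))"
| "merge_flow g (Prime a, Prime b) = g (Prime (Old a), Prime (Old b))"
| "merge_flow g (Orig a, Prime b) =
    (if a = b then g (Orig (Old a), Prime (Old a)) + (\<Sum>j\<in>{j. (a, j) \<in> B}. sub_back g a j)
     else sub_in g a b - sub_back g a b)"
| "merge_flow g (Prime a, Orig b) = 0"

context
  fixes S T :: "'a set" and g :: "'a svert node \<times> 'a svert node \<Rightarrow> real"
    and a b :: "'a svert node \<Rightarrow> real"
  assumes S_V: "S \<subseteq> V" and T_V: "T \<subseteq> V"
    and flow: "is_flow Wsub Esub (Orig ` Old ` S) (Prime ` Old ` T) g a b"
begin

lemma sub_flow_no_supply_at_Sub:
  "a (Orig (Sub s)) = 0" "b (Orig (Sub s)) = 0" "a (Prime (Sub s)) = 0" "b (Prime (Sub s)) = 0"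
proof -
  have "Orig (Sub s) \<notin> Orig ` Old ` S" "Prime (Sub s) \<notin> Orig ` Old ` S"
    "Orig (Sub s) \<notin> Prime ` Old ` T" "Prime (Sub s) \<notin> Prime ` Old ` T"
    by auto
  then show "a (Orig (Sub s)) = 0" "b (Orig (Sub s)) = 0" "a (Prime (Sub s)) = 0" "b (Prime (Sub s)) = 0"
    using is_flow_supply_outside[OF flow] by simp_all
qed

lemma sub_gadget_bounded:
  assumes "(i, j) \<in> B"
  shows "0 \<le> sub_in g i j" "sub_in g i j \<le> 1" "0 \<le> sub_out g i j" "sub_out g i j \<le> 1"
  using assms is_flow_edge_bounds[OF flow, of "(Orig (Old i), Orig (Sub {i, j}))"]
    is_flow_edge_bounds[OF flow, of "(Prime (Sub {i, j}), Prime (Old i))"]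
  by (auto simp: sub_in_def sub_out_def)

lemma sub_gadget_balance:
  assumes ij: "(i, j) \<in> B"
  shows "sub_in g i j + sub_in g j i = sub_out g i j + sub_out g j i"
proof -
  have W: "Orig (Sub {i, j}) \<in> Wsub" "Prime (Sub {i, j}) \<in> Wsub"
    using ij by auto
  have "g (Orig (Old i), Orig (Sub {i, j})) + g (Orig (Old j), Orig (Sub {i, j}))
      = g (Orig (Sub {i, j}), Prime (Sub {i, j}))"
    "g (Orig (Sub {i, j}), Prime (Sub {i, j}))
      = g (Prime (Sub {i, j}), Prime (Old i)) + g (Prime (Sub {i, j}), Prime (Old j))"
    using is_flow_conservation[OF flow W(1)] is_flow_conservation[OF flow W(2)]
    by (simp_all add: sums_Esub_at_Sub[OF ij] sub_flow_no_supply_at_Sub)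
  then show ?thesis
    by (simp add: sub_in_def sub_out_def insert_commute)
qed

(* By the balance, sub_in g i j \<le> sub_out g i j iff sub_in g j i \<ge> sub_out g j i. *)
lemma sub_back_exchange:
  assumes ij: "(i, j) \<in> B"
  shows "sub_back g j i + (sub_in g i j - sub_back g i j) = sub_out g j i"
  using sub_gadget_balance[OF ij] sub_gadget_bounded[OF ij] sub_gadget_bounded[OF B_swap[OF ij]]
  by (auto simp: sub_back_def min_def)

lemma merge_in_sum:
  assumes "v \<in> Wmix"
  shows "(\<Sum>u\<in>{u. (u, v) \<in> Emix}. merge_flow g (u, v))
    = (\<Sum>u\<in>{u. (u, map_node Old v) \<in> Esub}. g (u, map_node Old v))"
proof (cases v)
  case (Orig i)
  then show ?thesis by (simp add: sum_Emix_into_Orig sum_Esub_into_Orig_Old)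
next
  case (Prime i)
  with assms have i: "i \<in> V" by simp
  have "(\<Sum>j\<in>{j. (i, j) \<in> B}. merge_flow g (Orig j, Prime i))
      = (\<Sum>j\<in>{j. (i, j) \<in> B}. sub_out g i j - sub_back g i j)"
  proof (rule sum.cong)
    fix j assume "j \<in> {j. (i, j) \<in> B}"
    then have "(j, i) \<in> B" by (simp add: B_swap)
    with sub_back_exchange[OF this] show
      "merge_flow g (Orig j, Prime i) = sub_out g i j - sub_back g i j"
      by (auto dest: B_neq)
  qed simp
  with Prime i show ?thesis
    by (simp add: sum_Emix_into_Prime sum_Esub_into_Prime_Old sum_subtractf sub_out_def)
qed

lemma merge_out_sum:
  assumes "v \<in> Wmix"
  shows "(\<Sum>w\<in>{w. (v, w) \<in> Emix}. merge_flow g (v, w))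
    = (\<Sum>w\<in>{w. (map_node Old v, w) \<in> Esub}. g (map_node Old v, w))"
proof (cases v)
  case (Orig i)
  with assms have i: "i \<in> V" by simp
  have "(\<Sum>j\<in>{j. (i, j) \<in> B}. merge_flow g (Orig i, Prime j))
      = (\<Sum>j\<in>{j. (i, j) \<in> B}. sub_in g i j - sub_back g i j)"
    by (rule sum.cong) (auto dest: B_neq)
  with Orig i show ?thesis
    by (simp add: sum_Emix_out_of_Orig sum_Esub_out_of_Orig_Old sum_subtractf sub_in_def)
next
  case (Prime i)
  then show ?thesis by (simp add: sum_Emix_out_of_Prime sum_Esub_out_of_Prime_Old)
qed

lemma merge_flow_bounded:
  assumes e: "e \<in> Emix"
  shows "0 \<le> merge_flow g e \<and> merge_flow g e \<le> 1"
proof -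
  have shortcut_bounded: "0 \<le> merge_flow g (Orig i, Prime i) \<and> merge_flow g (Orig i, Prime i) \<le> 1"
    if i: "i \<in> V" for i
  proof -
    have back_le: "0 \<le> sub_back g i j \<and> sub_back g i j \<le> sub_out g i j" if "(i, j) \<in> B" for j
      using sub_gadget_bounded[OF that] by (simp add: sub_back_def)
    from is_flow_throughput[OF flow, of "Prime (Old i)"] is_flow_supply_nonneg[OF flow, of "Prime (Old i)"] i
    have "g (Orig (Old i), Prime (Old i)) + (\<Sum>c\<in>{c. (c, i) \<in> DR}. g (Prime (Old c), Prime (Old i)))
        + (\<Sum>j\<in>{j. (i, j) \<in> B}. sub_out g i j) \<le> 1"
      by (simp add: sum_Esub_into_Prime_Old sub_out_def)
    moreover have "0 \<le> (\<Sum>c\<in>{c. (c, i) \<in> DR}. g (Prime (Old c), Prime (Old i)))"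
      by (rule sum_nonneg) (use is_flow_edge_bounds[OF flow] in simp)
    moreover have "(\<Sum>j\<in>{j. (i, j) \<in> B}. sub_back g i j) \<le> (\<Sum>j\<in>{j. (i, j) \<in> B}. sub_out g i j)"
      by (rule sum_mono) (use back_le in simp)
    moreover have "0 \<le> (\<Sum>j\<in>{j. (i, j) \<in> B}. sub_back g i j)"
      by (rule sum_nonneg) (use back_le in simp)
    moreover have "0 \<le> g (Orig (Old i), Prime (Old i))"
      using is_flow_edge_bounds[OF flow] i by simp
    ultimately show ?thesis by simp
  qed
  from e show ?thesis
  proof (cases rule: Emix_cases)
    case (Orig_Orig a c)
    then show ?thesis using is_flow_edge_bounds[OF flow, of "(Orig (Old a), Orig (Old c))"] by simp
  next
    case (Prime_Prime a c)
    then show ?thesis using is_flow_edge_bounds[OF flow, of "(Prime (Old a), Prime (Old c))"] by simp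
  next
    case (shortcut i)
    then show ?thesis using shortcut_bounded by simp
  next
    case (bidirected i j)
    then show ?thesis using sub_gadget_bounded[of i j] B_neq by (simp add: sub_back_def)
  qed
qed

lemma merge_is_flow:
  "is_flow Wmix Emix (Orig ` S) (Prime ` T) (merge_flow g) (a \<circ> map_node Old) (b \<circ> map_node Old)"
proof -
  have Wmix_Wsub: "map_node Old v \<in> Wsub \<longleftrightarrow> v \<in> Wmix" for v
    by (cases v) auto
  have "(a \<circ> map_node Old) v = 0" if "v \<notin> Orig ` S \<inter> Wmix" for v
    using that S_V is_flow_supply_outside(1)[OF flow, of "map_node Old v"] by (cases v) auto
  moreover have "(b \<circ> map_node Old) v = 0" if "v \<notin> Prime ` T \<inter> Wmix" for v
    using that T_V is_flow_supply_outside(2)[OF flow, of "map_node Old v"] by (cases v) auto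
  ultimately show ?thesis
    using merge_flow_bounded is_flow_supply_nonneg[OF flow] is_flow_conservation[OF flow]
      is_flow_throughput[OF flow]
    unfolding is_flow_def by (simp add: merge_in_sum merge_out_sum Wmix_Wsub)
qed

end

(* On the edges of the subdivided network b = a in the third and t = s in the fifth equation. *)
fun split_flow :: "('a node \<times> 'a node \<Rightarrow> real) \<Rightarrow> 'a svert node \<times> 'a svert node \<Rightarrow> real" where
  "split_flow f (Orig (Old a), Orig (Old b)) = f (Orig a, Orig b)"
| "split_flow f (Prime (Old a), Prime (Old b)) = f (Prime a, Prime b)"
| "split_flow f (Orig (Old a), Prime (Old b)) = f (Orig a, Prime a) + (\<Sum>j\<in>{j. (a, j) \<in> B}. cancel f a j)"
| "split_flow f (Orig (Old a), Orig (Sub s)) = excess f a (partner s a)"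
| "split_flow f (Orig (Sub s), Prime (Sub t)) = (\<Sum>x\<in>s. excess f x (partner s x))"
| "split_flow f (Prime (Sub s), Prime (Old b)) = excess f (partner s b) b"
| "split_flow f _ = 0"

fun extend_Old :: "('a node \<Rightarrow> real) \<Rightarrow> 'a svert node \<Rightarrow> real" where
  "extend_Old a (Orig (Old i)) = a (Orig i)"
| "extend_Old a (Prime (Old i)) = a (Prime i)"
| "extend_Old a _ = 0"

lemma split_flow_gadget:
  assumes "(i, j) \<in> B"
  shows "split_flow f (Orig (Old i), Orig (Sub {i, j})) = excess f i j"
    and "split_flow f (Prime (Sub {i, j}), Prime (Old i)) = excess f j i"
    and "split_flow f (Orig (Sub {i, j}), Prime (Sub {i, j})) = excess f i j + excess f j i"
  using B_neq[OF assms] by simp_all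

context
  fixes S T :: "'a set" and f :: "'a node \<times> 'a node \<Rightarrow> real" and a b :: "'a node \<Rightarrow> real"
  assumes S_V: "S \<subseteq> V" and T_V: "T \<subseteq> V"
    and flow: "is_flow Wmix Emix (Orig ` S) (Prime ` T) f a b"
begin

lemma split_in_sum:
  assumes "v \<in> Wmix"
  shows "(\<Sum>u\<in>{u. (u, map_node Old v) \<in> Esub}. split_flow f (u, map_node Old v))
    = (\<Sum>u\<in>{u. (u, v) \<in> Emix}. f (u, v))"
proof (cases v)
  case (Orig i)
  then show ?thesis by (simp add: sum_Emix_into_Orig sum_Esub_into_Orig_Old)
next
  case (Prime i)
  with assms have i: "i \<in> V" by simp
  have "(\<Sum>j\<in>{j. (i, j) \<in> B}. split_flow f (Prime (Sub {i, j}), Prime (Old i)))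
      = (\<Sum>j\<in>{j. (i, j) \<in> B}. f (Orig j, Prime i) - cancel f i j)"
    by (rule sum.cong) (auto simp: excess_def cancel_commute dest: B_neq)
  with Prime i show ?thesis
    by (simp add: sum_Emix_into_Prime sum_Esub_into_Prime_Old sum_subtractf)
qed

lemma split_out_sum:
  assumes "v \<in> Wmix"
  shows "(\<Sum>w\<in>{w. (map_node Old v, w) \<in> Esub}. split_flow f (map_node Old v, w))
    = (\<Sum>w\<in>{w. (v, w) \<in> Emix}. f (v, w))"
proof (cases v)
  case (Orig i)
  with assms have i: "i \<in> V" by simp
  have "(\<Sum>j\<in>{j. (i, j) \<in> B}. split_flow f (Orig (Old i), Orig (Sub {i, j})))
      = (\<Sum>j\<in>{j. (i, j) \<in> B}. f (Orig i, Prime j) - cancel f i j)"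
    by (rule sum.cong) (auto simp: excess_def dest: B_neq)
  with Orig i show ?thesis
    by (simp add: sum_Emix_out_of_Orig sum_Esub_out_of_Orig_Old sum_subtractf)
next
  case (Prime i)
  then show ?thesis by (simp add: sum_Emix_out_of_Prime sum_Esub_out_of_Prime_Old)
qed


lemma excess_le_1:
  assumes "(i, j) \<in> B"
  shows "excess f i j + excess f j i \<le> 1"
  using is_flow_edge_bounds[OF flow, of "(Orig i, Prime j)"]
    is_flow_edge_bounds[OF flow, of "(Orig j, Prime i)"] assms B_swap[OF assms]
  by (simp add: excess_add_excess abs_le_iff)

lemma split_sums_at_Sub:
  assumes ij: "(i, j) \<in> B" and w: "w \<in> {Orig (Sub {i, j}), Prime (Sub {i, j})}"
  shows "(\<Sum>u\<in>{u. (u, w) \<in> Esub}. split_flow f (u, w)) = excess f i j + excess f j i"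
    and "(\<Sum>u\<in>{u. (w, u) \<in> Esub}. split_flow f (w, u)) = excess f i j + excess f j i"
proof -
  have ji: "{j, i} = {i, j}" by (rule insert_commute)
  have "split_flow f (Orig (Old j), Orig (Sub {i, j})) = excess f j i"
    "split_flow f (Prime (Sub {i, j}), Prime (Old j)) = excess f i j"
    using split_flow_gadget[OF B_swap[OF ij]] unfolding ji by simp_all
  with w show "(\<Sum>u\<in>{u. (u, w) \<in> Esub}. split_flow f (u, w)) = excess f i j + excess f j i"
    and "(\<Sum>u\<in>{u. (w, u) \<in> Esub}. split_flow f (w, u)) = excess f i j + excess f j i"
    using B_neq[OF ij] by (auto simp: sums_Esub_at_Sub[OF ij])
qed

lemma split_flow_bounded:
  assumes e: "e \<in> Esub"
  shows "0 \<le> split_flow f e \<and> split_flow f e \<le> 1"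
proof -
  have shortcut_bounded: "0 \<le> split_flow f (Orig (Old i), Prime (Old i)) \<and> split_flow f (Orig (Old i), Prime (Old i)) \<le> 1"
    if i: "i \<in> V" for i
  proof -
    have cancel_le: "0 \<le> cancel f i j \<and> cancel f i j \<le> f (Orig j, Prime i)" if "(i, j) \<in> B" for j
      using that B_swap[OF that] is_flow_edge_bounds[OF flow, of "(Orig i, Prime j)"]
        is_flow_edge_bounds[OF flow, of "(Orig j, Prime i)"]
      by (auto simp: cancel_def)
    from is_flow_throughput[OF flow, of "Prime i"] is_flow_supply_nonneg[OF flow, of "Prime i"] i
    have "f (Orig i, Prime i) + (\<Sum>c\<in>{c. (c, i) \<in> DR}. f (Prime c, Prime i))
        + (\<Sum>j\<in>{j. (i, j) \<in> B}. f (Orig j, Prime i)) \<le> 1"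
      by (simp add: sum_Emix_into_Prime)
    moreover have "0 \<le> (\<Sum>c\<in>{c. (c, i) \<in> DR}. f (Prime c, Prime i))"
      by (rule sum_nonneg) (use is_flow_edge_bounds[OF flow] in simp)
    moreover have "(\<Sum>j\<in>{j. (i, j) \<in> B}. cancel f i j) \<le> (\<Sum>j\<in>{j. (i, j) \<in> B}. f (Orig j, Prime i))"
      by (rule sum_mono) (use cancel_le in simp)
    moreover have "0 \<le> (\<Sum>j\<in>{j. (i, j) \<in> B}. cancel f i j)"
      by (rule sum_nonneg) (use cancel_le in simp)
    moreover have "0 \<le> f (Orig i, Prime i)"
      using is_flow_edge_bounds[OF flow] i by simp
    ultimately show ?thesis by simp
  qed
  have excess_bounded: "0 \<le> excess f i j \<and> excess f i j \<le> 1" if "(i, j) \<in> B" for i j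
    using excess_le_1[OF that] excess_nonneg[of f i j] excess_nonneg[of f j i] by simp
  from e show ?thesis
  proof (cases rule: Esub_cases)
    case (Orig_Old a c)
    then show ?thesis using is_flow_edge_bounds[OF flow, of "(Orig a, Orig c)"] by simp
  next
    case (Prime_Old a c)
    then show ?thesis using is_flow_edge_bounds[OF flow, of "(Prime a, Prime c)"] by simp
  next
    case (shortcut i)
    then show ?thesis using shortcut_bounded by simp
  next
    case (into_Sub i j)
    then show ?thesis using excess_bounded split_flow_gadget by simp
  next
    case (through_Sub i j)
    then show ?thesis
      using excess_le_1[of i j] excess_nonneg[of f i j] excess_nonneg[of f j i] split_flow_gadget
      by simp
  next
    case (out_of_Sub i j)
    then show ?thesis using excess_bounded B_swap split_flow_gadget by simp
  qed
qed


lemma split_is_flow: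
  "is_flow Wsub Esub (Orig ` Old ` S) (Prime ` Old ` T) (split_flow f) (extend_Old a) (extend_Old b)"
proof -
  have balanced: "extend_Old a w + (\<Sum>u\<in>{u. (u, w) \<in> Esub}. split_flow f (u, w))
        = (\<Sum>u\<in>{u. (w, u) \<in> Esub}. split_flow f (w, u)) + extend_Old b w
      \<and> extend_Old a w + (\<Sum>u\<in>{u. (u, w) \<in> Esub}. split_flow f (u, w)) \<le> 1"
    if w: "w \<in> Wsub" for w
  proof (cases w rule: node_svert_cases)
    case (1 i)
    with w show ?thesis
      using split_in_sum[of "Orig i"] split_out_sum[of "Orig i"]
        is_flow_conservation[OF flow, of "Orig i"] is_flow_throughput[OF flow, of "Orig i"]
      by simp
  next
    case (3 i)
    with w show ?thesis
      using split_in_sum[of "Prime i"] split_out_sum[of "Prime i"]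
        is_flow_conservation[OF flow, of "Prime i"] is_flow_throughput[OF flow, of "Prime i"]
      by simp
  next
    case (2 s)
    with w obtain i j where "(i, j) \<in> B" "w = Orig (Sub {i, j})" by auto
    then show ?thesis using split_sums_at_Sub excess_le_1 by simp
  next
    case (4 s)
    with w obtain i j where "(i, j) \<in> B" "w = Prime (Sub {i, j})" by auto
    then show ?thesis using split_sums_at_Sub excess_le_1 by simp
  qed
  have "0 \<le> extend_Old a w \<and> 0 \<le> extend_Old b w" for w
    using is_flow_supply_nonneg[OF flow] by (cases w rule: node_svert_cases) auto
  moreover have "extend_Old a w = 0" if "w \<notin> Orig ` Old ` S \<inter> Wsub" for w
    using that S_V is_flow_supply_outside(1)[OF flow]
    by (cases w rule: node_svert_cases) (auto simp: image_iff)
  moreover have "extend_Old b w = 0" if "w \<notin> Prime ` Old ` T \<inter> Wsub" for w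
    using that T_V is_flow_supply_outside(2)[OF flow]
    by (cases w rule: node_svert_cases) (auto simp: image_iff)
  ultimately show ?thesis
    using split_flow_bounded balanced unfolding is_flow_def by blast
qed

end

lemma flow_values_eq:
  assumes "S \<subseteq> V" "T \<subseteq> V"
  shows "{(\<Sum>v\<in>Orig ` S. a v) | f a b. is_flow Wmix Emix (Orig ` S) (Prime ` T) f a b}
    = {(\<Sum>v\<in>Orig ` Old ` S. a v) | f a b. is_flow Wsub Esub (Orig ` Old ` S) (Prime ` Old ` T) f a b}"
    (is "?mix = ?sub")
proof
  show "?mix \<subseteq> ?sub"
  proof clarify
    fix f a b assume "is_flow Wmix Emix (Orig ` S) (Prime ` T) f a b"
    moreover have "(\<Sum>v\<in>Orig ` Old ` S. extend_Old a v) = (\<Sum>v\<in>Orig ` S. a v)"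
      by (simp add: sum.reindex inj_on_def image_image)
    ultimately show "\<exists>f' a' b'. (\<Sum>v\<in>Orig ` S. a v) = (\<Sum>v\<in>Orig ` Old ` S. a' v)
        \<and> is_flow Wsub Esub (Orig ` Old ` S) (Prime ` Old ` T) f' a' b'"
      using split_is_flow assms by metis
  qed
  show "?sub \<subseteq> ?mix"
  proof clarify
    fix g a b assume "is_flow Wsub Esub (Orig ` Old ` S) (Prime ` Old ` T) g a b"
    moreover have "(\<Sum>v\<in>Orig ` S. (a \<circ> map_node Old) v) = (\<Sum>v\<in>Orig ` Old ` S. a v)"
      by (simp add: sum.reindex inj_on_def image_image)
    ultimately show "\<exists>f' a' b'. (\<Sum>v\<in>Orig ` Old ` S. a v) = (\<Sum>v\<in>Orig ` S. a' v)
        \<and> is_flow Wmix Emix (Orig ` S) (Prime ` T) f' a' b'"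
      using merge_is_flow assms by metis
  qed
qed

end

theorem lemmaA6:
  fixes n k :: nat and D B DL DR :: "(nat \<times> nat) set" and S T :: "nat set"
  assumes "mixed_graph n D B"
    and "DL \<subseteq> D" and "DR \<subseteq> D"
    and "S \<subseteq> {1..n}" and "T \<subseteq> {1..n}" and "card S = k" and "card T = k"
  shows "max_flow (net_vertices {1..n}) (mixed_flow_edges {1..n} DL DR B) (Orig ` S) (Prime ` T)
       = max_flow (net_vertices (subdiv_vertices {1..n} B))
           (flow_edges (subdiv_vertices {1..n} B)
              (map_prod Old Old ` DL \<union> subdiv_new_edges B)
              (map_prod Old Old ` DR \<union> subdiv_new_edges B))
           (Orig ` Old ` S) (Prime ` Old ` T)"
proof -
  interpret bidirected_subdivision "{1..n}" B DL DR
    using assms(1-3) unfolding mixed_graph_def by unfold_locales auto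
  show ?thesis
    unfolding max_flow_def using flow_values_eq[OF assms(4,5)] by simp
qed

end
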